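(* Let $N, N_{\tilde y}, M, p \in \mathbb{N}$ with $p\le N$, $X\in\mathbb{R}^{N\times M}$, $\tilde Y \in \mathbb{R}^{N_{\tilde y}\times M}$, $\lambda\ge0$, $\Omega=\{1,\dots,N\}$. Let $\tilde Y = U\Sigma V$ be a singular value decomposition ($U,V$ orthogonal, $\Sigma$ with diagonal entries $\sigma_1(\tilde Y)\ge\sigma_2(\tilde Y)\ge\cdots$), and for $r\le\operatorname{rank}\tilde Y$ let $Z = \Sigma_{1:r,1:r}V_{1:r}$ ($V_{1:r}$ = first $r$ rows of $V$). Let $\bar S^{\mathrm r}_0=\emptyset$ and for $k\ge1$, $\bar s^{\mathrm r}_k \in \arg\max_{i\in\mathcal{F}(\bar S^{\mathrm r}_{k-1})} \{J_Z(\bar S^{\mathrm r}_{k-1}\cup\{i\}) - J_Z(\bar S^{\mathrm r}_{k-1})\}$, $\bar S^{\mathrm r}_k=\bar S^{\mathrm r}_{k-1}\cup\{\bar s^{\mathrm r}_k\}$, and let $\bar s^{\mathrm r,2}_k \in \arg\max_{i\in\mathcal{F}(\bar S^{\mathrm r}_{k-1})\setminus\{\bar s^{\mathrm r}_k\}}\{J_Z(\bar S^{\mathrm r}_{k-1}\cup\{i\}) - J_Z(\bar S^{\mathrm r}_{k-1})\}$ (the second-best element). Similarly let $\bar S^{\mathrm o}_0=\emptyset$, $\bar s^{\mathrm o}_k\in\arg\max_{i\in\mathcal{F}(\bar S^{\mathrm o}_{k-1})}\{J_{\tilde Y}(\bar S^{\mathrm o}_{k-1}\cup\{i\}) - J_{\tilde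 Y}(\bar S^{\mathrm o}_{k-1})\}$, $\bar S^{\mathrm o}_k = \bar S^{\mathrm o}_{k-1}\cup\{\bar s^{\mathrm o}_k\}$. If there is $k'\in\{1,\dots,p\}$ such that for every $k\in\{1,\dots,k'\}$ \[ J_Z(\bar S^{\mathrm r}_k) - J_Z(\bar S^{\mathrm r}_{k-1}\cup\{\bar s^{\mathrm r,2}_k\}) > \sum_{i=r+1}^{\operatorname{rank}\tilde Y}\sigma_i^2(\tilde Y), \] then $\bar S^{\mathrm r}_{k'} = \bar S^{\mathrm o}_{k'}$.
   Context: For a matrix $Y$ with $M$ columns and $S\subset\Omega$ with $X_SX_S^\top+\lambda I_{|S|}\succ0$, $J_Y(S) = \operatorname{tr}\{ Y X_S^\top (X_S X_S^\top + \lambda I_{|S|})^{-1} X_S Y^\top \}$, where $X_S$ is the submatrix of rows of $X$ indexed by $S$; $J_Y(\emptyset)=0$. For $S\subset\Omega$, the feasible set is $\mathcal{F}(S) = \{ i\in\Omega\setminus S : X_{S'}X_{S'}^\top + \lambda I_{|S'|}\succ0,\ S'=S\cup\{i\}\}$; the greedy sequences are assumed well defined (the relevant feasible sets nonempty, with at least two elements for defining $\bar s^{\mathrm r,2}_k$). *)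

theory Defs
  imports Jordan_Normal_Form.Gauss_Jordan_Elimination Jordan_Normal_Form.DL_Rank
    Jordan_Normal_Form.DL_Submatrix
begin

(* Row indices are 0-based: Omega = {0..<N} corresponds to {1,...,N} in the paper. *)

definition mtrace :: "real mat \<Rightarrow> real" where
  "mtrace A = (\<Sum>i<dim_row A. A $$ (i,i))"

definition pos_def_mat :: "nat \<Rightarrow> real mat \<Rightarrow> bool" where
  "pos_def_mat n A \<longleftrightarrow> A \<in> carrier_mat n n \<and> transpose_mat A = A \<and>
     (\<forall>v \<in> carrier_vec n. v \<noteq> 0\<^sub>v n \<longrightarrow> v \<bullet> (A *\<^sub>v v) > 0)"

definition rows_sub :: "real mat \<Rightarrow> nat set \<Rightarrow> real mat" where
  "rows_sub X S = submatrix X S {0..<dim_col X}"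

definition gram_reg :: "real mat \<Rightarrow> real \<Rightarrow> nat set \<Rightarrow> real mat" where
  "gram_reg X lam S = rows_sub X S * transpose_mat (rows_sub X S) + lam \<cdot>\<^sub>m 1\<^sub>m (card S)"

definition Jfun :: "real mat \<Rightarrow> real \<Rightarrow> real mat \<Rightarrow> nat set \<Rightarrow> real" where
  "Jfun X lam Y S = (if S = {} then 0 else
     mtrace (Y * transpose_mat (rows_sub X S) * the (mat_inverse (gram_reg X lam S))
               * rows_sub X S * transpose_mat Y))"

definition feasible :: "real mat \<Rightarrow> real \<Rightarrow> nat set \<Rightarrow> nat set" where
  "feasible X lam S = {i \<in> {0..<dim_row X} - S.
      pos_def_mat (card (insert i S)) (gram_reg X lam (insert i S))}"

definition is_argmax_gain :: "real mat \<Rightarrow> real \<Rightarrow> real mat \<Rightarrow> nat set \<Rightarrow> nat set \<Rightarrow> nat \<Rightarrow> bool" where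
  "is_argmax_gain X lam Y S A s \<longleftrightarrow> s \<in> A \<and>
     (\<forall>i \<in> A. Jfun X lam Y (insert i S) - Jfun X lam Y S \<le> Jfun X lam Y (insert s S) - Jfun X lam Y S)"

end

theory Submission
  imports Defs
begin

(* With H_T = X_T^T (X_T X_T^T + lam I)^-1 X_T one has J_Y(T) = sum of y H_T y^T over the rows y
   of Y, and 0 <= H_T <= I. J_Y is unchanged when Y is multiplied on the left by an orthogonal
   matrix, so J_Yt = J_W for W = Sig V, and Z consists of the first r rows of W. Hence
   0 <= J_Yt(T) - J_Z(T) <= sigma_(r+1)^2 + ... + sigma_rank^2 for every feasible T. A perturbation
   of the gains by at most this tail cannot change the greedy choice as long as the best
   Z-gain beats the second best by more than the tail, so by induction both greedy sequences
   coincide. *)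

lemma mtrace_mult_comm:
  fixes A B :: "real mat"
  assumes "A \<in> carrier_mat n m" "B \<in> carrier_mat m n"
  shows "mtrace (A * B) = mtrace (B * A)"
proof -
  have "mtrace (A * B) = (\<Sum>i<n. \<Sum>j<m. A $$ (i,j) * B $$ (j,i))"
    using assms by (simp add: mtrace_def scalar_prod_def atLeast0LessThan)
  also have "\<dots> = (\<Sum>j<m. \<Sum>i<n. B $$ (j,i) * A $$ (i,j))"
    by (subst sum.swap) (simp add: mult.commute)
  also have "\<dots> = mtrace (B * A)"
    using assms by (simp add: mtrace_def scalar_prod_def atLeast0LessThan)
  finally show ?thesis .
qed

lemma mtrace_sandwich_eq_sum_rows:
  fixes Y H :: "real mat"
  assumes Y: "Y \<in> carrier_mat n m" and H: "H \<in> carrier_mat m m"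
  shows "mtrace (Y * H * transpose_mat Y) = (\<Sum>i<n. row Y i \<bullet> (H *\<^sub>v row Y i))"
proof -
  have "(Y * H * transpose_mat Y) $$ (i,i) = row Y i \<bullet> (H *\<^sub>v row Y i)" if "i < n" for i
    using Y H that by (simp add: mult_mat_vec_def)
  then show ?thesis using Y H by (simp add: mtrace_def)
qed

lemma mtrace_sandwich_orthogonal:
  fixes U W H :: "real mat"
  assumes U: "U \<in> carrier_mat n n" "transpose_mat U * U = 1\<^sub>m n"
    and W: "W \<in> carrier_mat n m" and H: "H \<in> carrier_mat m m"
  shows "mtrace (U * W * H * transpose_mat (U * W)) = mtrace (W * H * transpose_mat W)"
proof -
  define C where "C = W * H * transpose_mat W"
  have C: "C \<in> carrier_mat n n" using W H by (simp add: C_def)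
  have "U * W * H * transpose_mat W = U * C"
    unfolding C_def assoc_mult_mat[OF U(1) W H] by (rule assoc_mult_mat) (use U W H in auto)
  moreover have "U * W * H * transpose_mat (U * W) = U * W * H * transpose_mat W * transpose_mat U"
    using U W H by (simp only: transpose_mult[OF U(1) W]) (rule assoc_mult_mat[symmetric], auto)
  ultimately have "mtrace (U * W * H * transpose_mat (U * W)) = mtrace (U * C * transpose_mat U)"
    by simp
  also have "\<dots> = mtrace (transpose_mat U * (U * C))"
    using U C by (intro mtrace_mult_comm[of _ n n]) auto
  also have "\<dots> = mtrace C"
    using U C by (simp add: assoc_mult_mat[of _ n n _ n, symmetric])
  finally show ?thesis by (simp add: C_def)
qed

lemma regularized_hat_form_bounds:
  fixes A Gi :: "real mat"
  assumes A: "A \<in> carrier_mat t m" and lam: "lam \<ge> 0" and Gi: "Gi \<in> carrier_mat t t"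
    and inv: "(A * transpose_mat A + lam \<cdot>\<^sub>m 1\<^sub>m t) * Gi = 1\<^sub>m t" and x: "x \<in> carrier_vec m"
  shows "0 \<le> x \<bullet> ((transpose_mat A * Gi * A) *\<^sub>v x) \<and> x \<bullet> ((transpose_mat A * Gi * A) *\<^sub>v x) \<le> x \<bullet> x"
proof -
  define y where "y = Gi *\<^sub>v (A *\<^sub>v x)"
  define w where "w = transpose_mat A *\<^sub>v y"
  have y: "y \<in> carrier_vec t" and w: "w \<in> carrier_vec m" using Gi A x by (auto simp: y_def w_def)
  have "(transpose_mat A * Gi * A) *\<^sub>v x = (transpose_mat A * Gi) *\<^sub>v (A *\<^sub>v x)"
    by (rule assoc_mult_mat_vec) (use A Gi x in auto)
  also have "\<dots> = w"
    unfolding w_def y_def by (rule assoc_mult_mat_vec) (use A Gi x in auto)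
  finally have Hx: "(transpose_mat A * Gi * A) *\<^sub>v x = w" .
  have "A *\<^sub>v x = ((A * transpose_mat A + lam \<cdot>\<^sub>m 1\<^sub>m t) * Gi) *\<^sub>v (A *\<^sub>v x)"
    using A x by (simp add: inv)
  also have "\<dots> = (A * transpose_mat A + lam \<cdot>\<^sub>m 1\<^sub>m t) *\<^sub>v y"
    unfolding y_def by (rule assoc_mult_mat_vec) (use A Gi x in auto)
  also have "\<dots> = (A * transpose_mat A) *\<^sub>v y + (lam \<cdot>\<^sub>m 1\<^sub>m t) *\<^sub>v y"
    by (rule add_mult_distrib_mat_vec) (use A y in auto)
  also have "(A * transpose_mat A) *\<^sub>v y = A *\<^sub>v w"
    unfolding w_def by (rule assoc_mult_mat_vec) (use A y in auto)
  also have "(lam \<cdot>\<^sub>m 1\<^sub>m t) *\<^sub>v y = lam \<cdot>\<^sub>v y"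
    using y by (intro eq_vecI) auto
  finally have Ax: "A *\<^sub>v x = A *\<^sub>v w + lam \<cdot>\<^sub>v y" .
  have "x \<bullet> w = y \<bullet> (A *\<^sub>v x)"
    using transpose_vec_mult_scalar[OF A x y] x w by (simp add: w_def comm_scalar_prod[of _ m])
  also have "\<dots> = y \<bullet> (A *\<^sub>v w) + lam * (y \<bullet> y)"
    using A w y by (simp add: Ax scalar_prod_add_distrib[of _ t])
  also have "y \<bullet> (A *\<^sub>v w) = w \<bullet> w"
    using transpose_vec_mult_scalar[OF A w y] by (simp add: w_def)
  finally have xw: "x \<bullet> w = w \<bullet> w + lam * (y \<bullet> y)" .
  have "(x - w) \<bullet> (x - w) = x \<bullet> x - 2 * (x \<bullet> w) + w \<bullet> w"
    using x w by (simp add: minus_scalar_prod_distrib[of _ m] scalar_prod_minus_distrib[of _ m])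
      (simp add: comm_scalar_prod[OF w x])
  with xw have xx: "x \<bullet> x - x \<bullet> w = (x - w) \<bullet> (x - w) + lam * (y \<bullet> y)"
    by simp
  have sq: "0 \<le> v \<bullet> v" for v :: "real vec"
    by (simp add: scalar_prod_def sum_nonneg)
  then have "0 \<le> lam * (y \<bullet> y)" using lam by simp
  then show ?thesis
    unfolding Hx using xw xx sq[of w] sq[of "x - w"] by linarith
qed

definition hat_mat :: "real mat \<Rightarrow> real \<Rightarrow> nat set \<Rightarrow> real mat" where
  "hat_mat X lam T =
     transpose_mat (rows_sub X T) * the (mat_inverse (gram_reg X lam T)) * rows_sub X T"

lemma rows_sub_carrier:
  assumes X: "X \<in> carrier_mat N M" and T: "T \<subseteq> {0..<N}"
  shows "rows_sub X T \<in> carrier_mat (card T) M"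
proof -
  have "{i. i < dim_row X \<and> i \<in> T} = T" "{j. j < dim_col X \<and> j \<in> {0..<dim_col X}} = {0..<M}"
    using X T by auto
  then show ?thesis
    unfolding rows_sub_def by (intro carrier_matI) (simp_all add: dim_submatrix)
qed

lemma gram_reg_inverse:
  assumes pd: "pos_def_mat (card T) (gram_reg X lam T)"
  shows "the (mat_inverse (gram_reg X lam T)) \<in> carrier_mat (card T) (card T)"
    and "gram_reg X lam T * the (mat_inverse (gram_reg X lam T)) = 1\<^sub>m (card T)"
proof -
  let ?G = "gram_reg X lam T"
  have G: "?G \<in> carrier_mat (card T) (card T)" using pd unfolding pos_def_mat_def by simp
  have "det ?G \<noteq> 0"
  proof
    assume "det ?G = 0"
    then obtain v where "v \<in> carrier_vec (card T)" "v \<noteq> 0\<^sub>v (card T)" "?G *\<^sub>v v = 0\<^sub>v (card T)"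
      using det_0_iff_vec_prod_zero_field[OF G] by blast
    with pd show False unfolding pos_def_mat_def by fastforce
  qed
  then have "?G \<in> Units (ring_mat TYPE(real) (card T) ())" by (rule det_non_zero_imp_unit[OF G])
  then obtain Gi where "mat_inverse ?G = Some Gi"
    using mat_inverse(1)[OF G, where b="()"] by fastforce
  then show "the (mat_inverse ?G) \<in> carrier_mat (card T) (card T)" "?G * the (mat_inverse ?G) = 1\<^sub>m (card T)"
    using mat_inverse(2)[OF G] by auto
qed

lemma hat_mat_carrier:
  assumes X: "X \<in> carrier_mat N M" and T: "T \<subseteq> {0..<N}"
    and pd: "pos_def_mat (card T) (gram_reg X lam T)"
  shows "hat_mat X lam T \<in> carrier_mat M M"
  using rows_sub_carrier[OF X T] gram_reg_inverse(1)[OF pd] unfolding hat_mat_def by simp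

lemma hat_mat_form_bounds:
  assumes X: "X \<in> carrier_mat N M" and lam: "lam \<ge> 0" and T: "T \<subseteq> {0..<N}"
    and pd: "pos_def_mat (card T) (gram_reg X lam T)" and x: "x \<in> carrier_vec M"
  shows "0 \<le> x \<bullet> (hat_mat X lam T *\<^sub>v x) \<and> x \<bullet> (hat_mat X lam T *\<^sub>v x) \<le> x \<bullet> x"
  unfolding hat_mat_def
proof (rule regularized_hat_form_bounds[OF rows_sub_carrier[OF X T] lam gram_reg_inverse(1)[OF pd] _ x])
  show "(rows_sub X T * transpose_mat (rows_sub X T) + lam \<cdot>\<^sub>m 1\<^sub>m (card T))
      * the (mat_inverse (gram_reg X lam T)) = 1\<^sub>m (card T)"
    by (fold gram_reg_def) (rule gram_reg_inverse(2)[OF pd])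
qed

lemma Jfun_eq_mtrace_hat_mat:
  assumes X: "X \<in> carrier_mat N M" and T: "T \<subseteq> {0..<N}" "T \<noteq> {}"
    and pd: "pos_def_mat (card T) (gram_reg X lam T)" and Y: "Y \<in> carrier_mat n M"
  shows "Jfun X lam Y T = mtrace (Y * hat_mat X lam T * transpose_mat Y)"
proof -
  let ?A = "rows_sub X T" and ?Gi = "the (mat_inverse (gram_reg X lam T))"
  have A: "?A \<in> carrier_mat (card T) M" by (rule rows_sub_carrier[OF X T(1)])
  have Gi: "?Gi \<in> carrier_mat (card T) (card T)" by (rule gram_reg_inverse(1)[OF pd])
  have "Y * transpose_mat ?A * ?Gi = Y * (transpose_mat ?A * ?Gi)"
    by (rule assoc_mult_mat) (use Y A Gi in auto)
  moreover have "Y * (transpose_mat ?A * ?Gi) * ?A = Y * hat_mat X lam T"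
    unfolding hat_mat_def by (rule assoc_mult_mat) (use Y A Gi in auto)
  ultimately show ?thesis unfolding Jfun_def using T(2) by simp
qed

lemma Jfun_eq_sum_rows:
  assumes X: "X \<in> carrier_mat N M" and T: "T \<subseteq> {0..<N}" "T \<noteq> {}"
    and pd: "pos_def_mat (card T) (gram_reg X lam T)" and Y: "Y \<in> carrier_mat n M"
  shows "Jfun X lam Y T = (\<Sum>i<n. row Y i \<bullet> (hat_mat X lam T *\<^sub>v row Y i))"
  unfolding Jfun_eq_mtrace_hat_mat[OF X T pd Y]
  by (rule mtrace_sandwich_eq_sum_rows[OF Y hat_mat_carrier[OF X T(1) pd]])

lemma Jfun_mult_orthogonal:
  assumes X: "X \<in> carrier_mat N M" and T: "T \<subseteq> {0..<N}"
    and pd: "pos_def_mat (card T) (gram_reg X lam T)"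
    and U: "U \<in> carrier_mat n n" "transpose_mat U * U = 1\<^sub>m n" and W: "W \<in> carrier_mat n M"
  shows "Jfun X lam (U * W) T = Jfun X lam W T"
proof (cases "T = {}")
  case False
  have "U * W \<in> carrier_mat n M" using U W by simp
  then show ?thesis
    using Jfun_eq_mtrace_hat_mat[OF X T False pd] W
      mtrace_sandwich_orthogonal[OF U W hat_mat_carrier[OF X T pd]] by simp
qed (simp add: Jfun_def)

lemma Jfun_row_truncation_bounds:
  assumes X: "X \<in> carrier_mat N M" and lam: "lam \<ge> 0" and T: "T \<subseteq> {0..<N}" "T \<noteq> {}"
    and pd: "pos_def_mat (card T) (gram_reg X lam T)"
    and Y: "Y \<in> carrier_mat n M" and Z: "Z \<in> carrier_mat r M" and r: "r \<le> n"
    and rows: "\<And>k. k < r \<Longrightarrow> row Z k = row Y k"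
  shows "0 \<le> Jfun X lam Y T - Jfun X lam Z T
    \<and> Jfun X lam Y T - Jfun X lam Z T \<le> (\<Sum>k\<in>{r..<n}. row Y k \<bullet> row Y k)"
proof -
  define q where "q v = v \<bullet> (hat_mat X lam T *\<^sub>v v)" for v
  have q: "0 \<le> q (row Y k) \<and> q (row Y k) \<le> row Y k \<bullet> row Y k" if "k < n" for k
    unfolding q_def using hat_mat_form_bounds[OF X lam T(1) pd] Y that by simp
  have "Jfun X lam Y T = (\<Sum>k\<in>{0..<r}. q (row Y k)) + (\<Sum>k\<in>{r..<n}. q (row Y k))"
    unfolding Jfun_eq_sum_rows[OF X T pd Y] q_def lessThan_atLeast0
    using r by (simp add: sum.atLeastLessThan_concat)
  moreover have "Jfun X lam Z T = (\<Sum>k\<in>{0..<r}. q (row Y k))"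
    unfolding Jfun_eq_sum_rows[OF X T pd Z] q_def lessThan_atLeast0 using rows by simp
  moreover have "0 \<le> (\<Sum>k\<in>{r..<n}. q (row Y k))"
    using q by (intro sum_nonneg) auto
  moreover have "(\<Sum>k\<in>{r..<n}. q (row Y k)) \<le> (\<Sum>k\<in>{r..<n}. row Y k \<bullet> row Y k)"
    using q by (intro sum_mono) auto
  ultimately show ?thesis by simp
qed

context vec_space
begin

lemma rank_le_nr:
  assumes A: "A \<in> carrier_mat n nc"
  shows "rank A \<le> n"
proof -
  have "VectorSpace.subspace class_ring (span (set (cols A))) V"
    using A by (metis carrier_matD(1) cols_dim span_is_subspace)
  then show ?thesis
    unfolding rank_def using subspace_dim fin_dim fin_dim_span_cols[OF A] dim_is_n by simp
qed

lemma rank_mult_le_left: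
  assumes A: "A \<in> carrier_mat n nc" and B: "B \<in> carrier_mat nc k"
  shows "rank (A * B) \<le> rank A"
proof -
  define W where "W = span (set (cols A))"
  have AB: "A * B \<in> carrier_mat n k" using A B by simp
  have W: "VectorSpace.subspace class_ring W V"
    unfolding W_def using A by (metis carrier_matD(1) cols_dim span_is_subspace)
  have "set (cols (A * B)) \<subseteq> W"
  proof
    fix x assume "x \<in> set (cols (A * B))"
    then obtain i where i: "i < k" "x = col (A * B) i"
      using AB by (metis cols_length cols_nth in_set_conv_nth carrier_matD(2))
    then have "x = A *\<^sub>v col B i" by (simp only: col_mult2[OF A B i(1)])
    then show "x \<in> W"
      using col_space_eq[OF A] A B i(1) unfolding W_def col_space_def by auto
  qed
  then have "span (set (cols (A * B))) \<subseteq> W"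
    using W by (simp add: span_is_subset)
  moreover have "VectorSpace.subspace class_ring (span (set (cols (A * B)))) V"
    using AB by (metis carrier_matD(1) cols_dim span_is_subspace)
  ultimately have sub: "VectorSpace.subspace class_ring (span (set (cols (A * B)))) (vs W)"
    using nested_subspaces[OF W] by blast
  have "vectorspace.fin_dim class_ring (vs W)"
    unfolding W_def using fin_dim_span_cols[OF A] .
  then show ?thesis
    unfolding rank_def using vectorspace.subspace_dim[OF subspace_is_vs[OF W] sub]
      fin_dim_span_cols[OF AB] W_def by auto
qed

lemma rank_eq_nc_if_inj:
  assumes K: "K \<in> carrier_mat n k"
    and inj: "\<And>v. v \<in> carrier_vec k \<Longrightarrow> K *\<^sub>v v = 0\<^sub>v n \<Longrightarrow> v = 0\<^sub>v k"
  shows "rank K = k"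
proof -
  have dist: "distinct (cols K)"
  proof (rule ccontr)
    assume "\<not> distinct (cols K)"
    then obtain a b where ab: "a \<noteq> b" "a < k" "b < k" "col K a = col K b"
      using K by (auto simp: distinct_conv_nth)
    have "K *\<^sub>v unit_vec k c = col K c" if "c < k" for c
      using K that by (intro eq_vecI) auto
    then have "K *\<^sub>v (unit_vec k a - unit_vec k b) = 0\<^sub>v n"
      using K ab by (auto simp: mult_minus_distrib_mat_vec)
    then have "unit_vec k a - unit_vec k b = (0\<^sub>v k :: 'a vec)"
      by (intro inj) auto
    then have "(unit_vec k a - unit_vec k b) $ a = (0\<^sub>v k :: 'a vec) $ a"
      by simp
    then show False
      using ab by simp
  qed
  have "lin_indpt (set (cols K))"
  proof
    assume "lin_dep (set (cols K))"
    then obtain v where "v \<in> carrier_vec k" "v \<noteq> 0\<^sub>v k" "K *\<^sub>v v = 0\<^sub>v n"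
      using lin_depE[OF K _ dist] by blast
    then show False using inj by blast
  qed
  then show ?thesis using lin_indpt_full_rank[OF K dist] by blast
qed

end

lemma row_diagonal_mult:
  fixes D V :: "'a :: comm_ring_1 mat"
  assumes D: "D \<in> carrier_mat n m" "diagonal_mat D" and V: "V \<in> carrier_mat m k" and i: "i < n"
  shows "row (D * V) i = (if i < m then D $$ (i,i) \<cdot>\<^sub>v row V i else 0\<^sub>v k)"
proof (rule eq_vecI)
  fix j assume "j < dim_vec (if i < m then D $$ (i,i) \<cdot>\<^sub>v row V i else 0\<^sub>v k)"
  then have j: "j < k" using V by (simp split: if_splits)
  have "row (D * V) i $ j = (\<Sum>c<m. D $$ (i,c) * V $$ (c,j))"
    using D V i j by (simp add: scalar_prod_def atLeast0LessThan)
  also have "\<dots> = (\<Sum>c<m. if c = i then D $$ (i,i) * V $$ (i,j) else 0)"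
    using D i by (intro sum.cong) (auto simp: diagonal_mat_def)
  finally show "row (D * V) i $ j = (if i < m then D $$ (i,i) \<cdot>\<^sub>v row V i else 0\<^sub>v k) $ j"
    using V j by simp
qed (use V in simp)

lemma submatrix_prefix:
  assumes A: "A \<in> carrier_mat n m" and "r \<le> n" "s \<le> m"
  shows "submatrix A {0..<r} {0..<s} = mat r s (\<lambda>(i,j). A $$ (i,j))"
proof -
  have pick: "pick {0..<r} i = i" if "i < r" for i r
  proof -
    have "{a \<in> {0..<r}. a < i} = {0..<i}" using that by auto
    then show ?thesis using pick_card_in_set[of i "{0..<r}"] that by simp
  qed
  have "{i. i < n \<and> i \<in> {0..<r}} = {0..<r}" "{j. j < m \<and> j \<in> {0..<s}} = {0..<s}"
    using assms by auto
  then show ?thesis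
    using A unfolding submatrix_def by (intro eq_matI) (auto simp: pick)
qed

lemma truncated_svd_factor:
  fixes Sig V :: "real mat"
  assumes Sig: "Sig \<in> carrier_mat Ny M" "diagonal_mat Sig" and V: "V \<in> carrier_mat M M"
    and r: "r \<le> Ny" "r \<le> M"
  shows "submatrix Sig {0..<r} {0..<r} * submatrix V {0..<r} {0..<M} \<in> carrier_mat r M"
    and "k < r \<Longrightarrow> row (submatrix Sig {0..<r} {0..<r} * submatrix V {0..<r} {0..<M}) k = row (Sig * V) k"
proof -
  let ?Sr = "mat r r (\<lambda>(i,j). Sig $$ (i,j))" and ?Vr = "mat r M (\<lambda>(i,j). V $$ (i,j))"
  have sub: "submatrix Sig {0..<r} {0..<r} = ?Sr" "submatrix V {0..<r} {0..<M} = ?Vr"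
    using submatrix_prefix[OF Sig(1) r] submatrix_prefix[OF V r(2) order_refl] by auto
  then show "submatrix Sig {0..<r} {0..<r} * submatrix V {0..<r} {0..<M} \<in> carrier_mat r M"
    by (auto intro!: mult_carrier_mat)
  assume k: "k < r"
  have "diagonal_mat ?Sr" using Sig r by (auto simp: diagonal_mat_def)
  then have "row (?Sr * ?Vr) k = Sig $$ (k,k) \<cdot>\<^sub>v row ?Vr k"
    using row_diagonal_mult[of ?Sr r r ?Vr M k] k by simp
  also have "\<dots> = row (Sig * V) k"
    using row_diagonal_mult[OF Sig V] k r V by (auto intro!: eq_vecI)
  finally show "row (submatrix Sig {0..<r} {0..<r} * submatrix V {0..<r} {0..<M}) k = row (Sig * V) k"
    unfolding sub .
qed

lemma row_diagonal_mult_orthogonal_norm: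
  fixes Sig V :: "real mat"
  assumes Sig: "Sig \<in> carrier_mat n m" "diagonal_mat Sig"
    and V: "V \<in> carrier_mat m m" "V * transpose_mat V = 1\<^sub>m m" and k: "k < n"
  shows "row (Sig * V) k \<bullet> row (Sig * V) k = (if k < m then (Sig $$ (k,k))\<^sup>2 else 0)"
proof (cases "k < m")
  case True
  have "row V k \<bullet> row V k = (V * transpose_mat V) $$ (k,k)" using V(1) True by simp
  then have "row V k \<bullet> row V k = 1" using V(2) True by simp
  then show ?thesis
    using row_diagonal_mult[OF Sig V(1) k] True V(1) by (simp add: power2_eq_square)
qed (use row_diagonal_mult[OF Sig V(1) k] in simp)

lemma orthogonal_mult_transpose_cols:
  fixes V :: "real mat"
  assumes V: "V \<in> carrier_mat m m" "V * transpose_mat V = 1\<^sub>m m" and j: "j \<le> m"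
  shows "V * mat m j (\<lambda>(a,l). V $$ (l,a)) = mat m j (\<lambda>(c,l). if c = l then 1 else 0)"
proof (rule eq_matI)
  fix c l assume "c < dim_row (mat m j (\<lambda>(c,l). if c = l then 1 else (0::real)))"
    "l < dim_col (mat m j (\<lambda>(c,l). if c = l then 1 else (0::real)))"
  then have cl: "c < m" "l < j" by auto
  then have "(V * mat m j (\<lambda>(a,l). V $$ (l,a))) $$ (c,l) = (V * transpose_mat V) $$ (c,l)"
    using V(1) j by (simp add: scalar_prod_def)
  then show "(V * mat m j (\<lambda>(a,l). V $$ (l,a))) $$ (c,l)
      = mat m j (\<lambda>(c,l). if c = l then 1 else 0) $$ (c,l)"
    using V(2) cl j by simp
qed (use V in auto)

lemma rank_svd_ge_nonzero_diagonal:
  fixes U Sig V :: "real mat"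
  assumes U: "U \<in> carrier_mat n n" "transpose_mat U * U = 1\<^sub>m n"
    and V: "V \<in> carrier_mat m m" "V * transpose_mat V = 1\<^sub>m m"
    and Sig: "Sig \<in> carrier_mat n m" "diagonal_mat Sig"
    and j: "j \<le> n" "j \<le> m" and nz: "\<And>l. l < j \<Longrightarrow> Sig $$ (l,l) \<noteq> 0"
  shows "j \<le> vec_space.rank n (U * Sig * V)"
proof -
  \<comment> \<open>Q consists of the first j columns of the transpose of V, so U Sig V Q = U D
      where D consists of the first j columns of Sig.\<close>
  define Q :: "real mat" where "Q = mat m j (\<lambda>(a,l). V $$ (l,a))"
  have Q: "Q \<in> carrier_mat m j" by (simp add: Q_def)
  have USV: "U * Sig * V \<in> carrier_mat n m" using U Sig V by simp
  have VQ: "V * Q = mat m j (\<lambda>(c,l). if c = l then 1 else 0)"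
    unfolding Q_def by (rule orthogonal_mult_transpose_cols[OF V j(2)])
  define D where "D = Sig * (V * Q)"
  have D: "D \<in> carrier_mat n j" using Sig V Q by (simp add: D_def)
  have Dv: "(D *\<^sub>v v) $ l = Sig $$ (l,l) * v $ l" if "v \<in> carrier_vec j" "l < j" for v l
  proof -
    have "D = mat n j (\<lambda>(l,i). Sig $$ (l,i))"
      using Sig(1) j unfolding D_def VQ
      by (intro eq_matI) (auto simp: scalar_prod_def if_distrib if_distribR sum.delta' cong: if_cong)
    then have "(D *\<^sub>v v) $ l = (\<Sum>i<j. Sig $$ (l,i) * v $ i)"
      using that j by (simp add: scalar_prod_def atLeast0LessThan)
    also have "\<dots> = (\<Sum>i<j. if i = l then Sig $$ (l,l) * v $ l else 0)"
      using Sig that j by (intro sum.cong) (auto simp: diagonal_mat_def)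
    finally show ?thesis using that by simp
  qed
  have "U * Sig * V * Q = U * D"
    unfolding D_def assoc_mult_mat[OF U(1) Sig(1) V(1)] assoc_mult_mat[OF Sig(1) V(1) Q, symmetric]
    by (rule assoc_mult_mat) (use U Sig V Q in auto)
  moreover have "vec_space.rank n (U * D) = j"
  proof (rule vec_space.rank_eq_nc_if_inj)
    fix v assume v: "v \<in> carrier_vec j" and UDv: "U * D *\<^sub>v v = 0\<^sub>v n"
    have "D *\<^sub>v v = (transpose_mat U * U) *\<^sub>v (D *\<^sub>v v)" using U(2) D v by simp
    also have "\<dots> = transpose_mat U *\<^sub>v (U *\<^sub>v (D *\<^sub>v v))"
      by (rule assoc_mult_mat_vec) (use U D v in auto)
    also have "U *\<^sub>v (D *\<^sub>v v) = (U * D) *\<^sub>v v"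
      by (rule assoc_mult_mat_vec[symmetric]) (use U D v in auto)
    finally have "D *\<^sub>v v = 0\<^sub>v n"
      using UDv U by (auto intro!: eq_vecI simp: scalar_prod_def)
    show "v = 0\<^sub>v j"
    proof (rule eq_vecI)
      fix l assume "l < dim_vec (0\<^sub>v j)"
      then have l: "l < j" by simp
      have "Sig $$ (l,l) * v $ l = 0" using Dv[OF v l] \<open>D *\<^sub>v v = 0\<^sub>v n\<close> l j by simp
      then show "v $ l = 0\<^sub>v j $ l" using nz[OF l] l by simp
    qed (use v in simp)
  qed (use U D in simp)
  ultimately show ?thesis
    using vec_space.rank_mult_le_left[OF USV Q] by simp
qed

lemma svd_diagonal_eq_0_beyond_rank:
  fixes U Sig V :: "real mat"
  assumes U: "U \<in> carrier_mat n n" "transpose_mat U * U = 1\<^sub>m n"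
    and V: "V \<in> carrier_mat m m" "V * transpose_mat V = 1\<^sub>m m"
    and Sig: "Sig \<in> carrier_mat n m" "diagonal_mat Sig"
      "\<And>i. i < min n m \<Longrightarrow> Sig $$ (i,i) \<ge> 0"
      "\<And>i j. i \<le> j \<Longrightarrow> j < min n m \<Longrightarrow> Sig $$ (j,j) \<le> Sig $$ (i,i)"
    and j: "vec_space.rank n (U * Sig * V) \<le> j" "j < min n m"
  shows "Sig $$ (j,j) = 0"
proof (rule ccontr)
  assume "Sig $$ (j,j) \<noteq> 0"
  then have "Sig $$ (l,l) \<noteq> 0" if "l < Suc j" for l
    using Sig(3)[OF j(2)] Sig(4)[of l j] that j(2) by fastforce
  then have "Suc j \<le> vec_space.rank n (U * Sig * V)"
    using rank_svd_ge_nonzero_diagonal[OF U V Sig(1,2)] j(2) by simp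
  then show False using j(1) by simp
qed

lemma svd_truncation_Jfun_bounds:
  fixes X Yt U Sig V :: "real mat"
  assumes X: "X \<in> carrier_mat N M" and lam: "lam \<ge> 0" and T: "T \<subseteq> {0..<N}" "T \<noteq> {}"
    and pd: "pos_def_mat (card T) (gram_reg X lam T)"
    and U: "U \<in> carrier_mat Ny Ny" "transpose_mat U * U = 1\<^sub>m Ny"
    and V: "V \<in> carrier_mat M M" "V * transpose_mat V = 1\<^sub>m M"
    and Sig: "Sig \<in> carrier_mat Ny M" "diagonal_mat Sig"
      "\<And>i. i < min Ny M \<Longrightarrow> Sig $$ (i,i) \<ge> 0"
      "\<And>i j. i \<le> j \<Longrightarrow> j < min Ny M \<Longrightarrow> Sig $$ (j,j) \<le> Sig $$ (i,i)"
    and svd: "Yt = U * Sig * V" and r: "r \<le> vec_space.rank Ny Yt"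
  defines "Z \<equiv> submatrix Sig {0..<r} {0..<r} * submatrix V {0..<r} {0..<M}"
  shows "0 \<le> Jfun X lam Yt T - Jfun X lam Z T
    \<and> Jfun X lam Yt T - Jfun X lam Z T \<le> (\<Sum>i\<in>{r..<vec_space.rank Ny Yt}. (Sig $$ (i,i))\<^sup>2)"
proof -
  define rk where "rk = vec_space.rank Ny Yt"
  define W where "W = Sig * V"
  have W: "W \<in> carrier_mat Ny M" using Sig V by (simp add: W_def)
  have "Yt \<in> carrier_mat Ny M" using U Sig V by (simp add: svd)
  then have rk: "rk \<le> Ny" "rk \<le> M"
    unfolding rk_def by (rule vec_space.rank_le_nr, rule vec_space.rank_le_nc)
  have "Jfun X lam Yt T = Jfun X lam W T"
    unfolding svd W_def assoc_mult_mat[OF U(1) Sig(1) V(1)]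
    using Jfun_mult_orthogonal[OF X T(1) pd U W] by (simp add: W_def)
  moreover have "Z \<in> carrier_mat r M" "\<And>k. k < r \<Longrightarrow> row Z k = row W k"
    using truncated_svd_factor[OF Sig(1,2) V(1)] r rk unfolding Z_def W_def rk_def by auto
  ultimately have "0 \<le> Jfun X lam Yt T - Jfun X lam Z T
    \<and> Jfun X lam Yt T - Jfun X lam Z T \<le> (\<Sum>k\<in>{r..<Ny}. row W k \<bullet> row W k)"
    using Jfun_row_truncation_bounds[OF X lam T pd W] r rk unfolding rk_def by auto
  moreover have "(\<Sum>k\<in>{r..<Ny}. row W k \<bullet> row W k) = (\<Sum>k\<in>{r..<rk}. (Sig $$ (k,k))\<^sup>2)"
  proof -
    have norm: "row W k \<bullet> row W k = (if k < M then (Sig $$ (k,k))\<^sup>2 else 0)" if "k < Ny" for k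
      unfolding W_def by (rule row_diagonal_mult_orthogonal_norm[OF Sig(1,2) V that])
    have "(\<Sum>k\<in>{r..<Ny}. row W k \<bullet> row W k)
        = (\<Sum>k\<in>{r..<rk}. row W k \<bullet> row W k) + (\<Sum>k\<in>{rk..<Ny}. row W k \<bullet> row W k)"
      using r rk unfolding rk_def by (simp add: sum.atLeastLessThan_concat)
    moreover have "(\<Sum>k\<in>{rk..<Ny}. row W k \<bullet> row W k) = 0"
      using norm svd_diagonal_eq_0_beyond_rank[OF U V Sig] unfolding rk_def svd by (intro sum.neutral) auto
    moreover have "(\<Sum>k\<in>{r..<rk}. row W k \<bullet> row W k) = (\<Sum>k\<in>{r..<rk}. (Sig $$ (k,k))\<^sup>2)"
      using norm rk by (intro sum.cong) auto
    ultimately show ?thesis by simp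
  qed
  ultimately show ?thesis unfolding rk_def by simp
qed

lemma greedy_choice_stable_under_perturbation:
  assumes a: "a \<in> F"
    and c: "is_argmax_gain X lam Z S (F - {a}) c"
    and b: "is_argmax_gain X lam Y S F b"
    and close: "\<And>i. i \<in> F \<Longrightarrow> 0 \<le> Jfun X lam Y (insert i S) - Jfun X lam Z (insert i S)
      \<and> Jfun X lam Y (insert i S) - Jfun X lam Z (insert i S) \<le> \<epsilon>"
    and gap: "Jfun X lam Z (insert a S) - Jfun X lam Z (insert c S) > \<epsilon>"
  shows "b = a"
proof (rule ccontr)
  assume "b \<noteq> a"
  then have "Jfun X lam Z (insert b S) \<le> Jfun X lam Z (insert c S)"
    using b c unfolding is_argmax_gain_def by force
  moreover have "Jfun X lam Y (insert a S) \<le> Jfun X lam Y (insert b S)"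
    using a b unfolding is_argmax_gain_def by force
  moreover have "b \<in> F" using b unfolding is_argmax_gain_def by blast
  ultimately show False using close[OF a] close[of b] gap by linarith
qed

theorem theorem3:
  fixes N Ny M p r k' :: nat and X Yt U Sig V :: "real mat" and lam :: real
    and sr sr2 so :: "nat \<Rightarrow> nat" and Sr So :: "nat \<Rightarrow> nat set"
  assumes "p \<le> N"
    and X: "X \<in> carrier_mat N M"
    and Yt: "Yt \<in> carrier_mat Ny M"
    and lam: "lam \<ge> 0"
    (* singular value decomposition Yt = U Sig V *)
    and U: "U \<in> carrier_mat Ny Ny" "transpose_mat U * U = 1\<^sub>m Ny" "U * transpose_mat U = 1\<^sub>m Ny"
    and V: "V \<in> carrier_mat M M" "transpose_mat V * V = 1\<^sub>m M" "V * transpose_mat V = 1\<^sub>m M"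
    and Sig: "Sig \<in> carrier_mat Ny M"
      "\<And>i j. i < Ny \<Longrightarrow> j < M \<Longrightarrow> i \<noteq> j \<Longrightarrow> Sig $$ (i,j) = 0"
      "\<And>i. i < min Ny M \<Longrightarrow> Sig $$ (i,i) \<ge> 0"
      "\<And>i j. i \<le> j \<Longrightarrow> j < min Ny M \<Longrightarrow> Sig $$ (j,j) \<le> Sig $$ (i,i)"
    and svd: "Yt = U * Sig * V"
    and r: "r \<le> vec_space.rank Ny Yt"
    (* greedy sequence for Z = Sig_{1:r,1:r} V_{1:r} *)
    and Sr0: "Sr 0 = {}"
    and sr: "\<And>k. 1 \<le> k \<Longrightarrow> k \<le> p \<Longrightarrow>
       is_argmax_gain X lam (submatrix Sig {0..<r} {0..<r} * submatrix V {0..<r} {0..<M})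
         (Sr (k-1)) (feasible X lam (Sr (k-1))) (sr k)"
    and Srk: "\<And>k. 1 \<le> k \<Longrightarrow> k \<le> p \<Longrightarrow> Sr k = insert (sr k) (Sr (k-1))"
    (* greedy sequence for Yt *)
    and So0: "So 0 = {}"
    and so: "\<And>k. 1 \<le> k \<Longrightarrow> k \<le> p \<Longrightarrow>
       is_argmax_gain X lam Yt (So (k-1)) (feasible X lam (So (k-1))) (so k)"
    and Sok: "\<And>k. 1 \<le> k \<Longrightarrow> k \<le> p \<Longrightarrow> So k = insert (so k) (So (k-1))"
    and k': "1 \<le> k'" "k' \<le> p"
    (* second-best elements *)
    and sr2: "\<And>k. 1 \<le> k \<Longrightarrow> k \<le> k' \<Longrightarrow>
       is_argmax_gain X lam (submatrix Sig {0..<r} {0..<r} * submatrix V {0..<r} {0..<M})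
         (Sr (k-1)) (feasible X lam (Sr (k-1)) - {sr k}) (sr2 k)"
    and gap: "\<And>k. 1 \<le> k \<Longrightarrow> k \<le> k' \<Longrightarrow>
       Jfun X lam (submatrix Sig {0..<r} {0..<r} * submatrix V {0..<r} {0..<M}) (Sr k)
       - Jfun X lam (submatrix Sig {0..<r} {0..<r} * submatrix V {0..<r} {0..<M}) (insert (sr2 k) (Sr (k-1)))
       > (\<Sum>i\<in>{r..<vec_space.rank Ny Yt}. (Sig $$ (i,i))^2)"
  shows "Sr k' = So k'"
proof -
  define Z where "Z = submatrix Sig {0..<r} {0..<r} * submatrix V {0..<r} {0..<M}"
  define tail where "tail = (\<Sum>i\<in>{r..<vec_space.rank Ny Yt}. (Sig $$ (i,i))\<^sup>2)"
  have diag: "diagonal_mat Sig" using Sig(1,2) by (auto simp: diagonal_mat_def)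
  have close: "0 \<le> Jfun X lam Yt (insert i S) - Jfun X lam Z (insert i S)
      \<and> Jfun X lam Yt (insert i S) - Jfun X lam Z (insert i S) \<le> tail"
    if "S \<subseteq> {0..<N}" "i \<in> feasible X lam S" for S i
    using that X unfolding Z_def tail_def feasible_def
    by (intro svd_truncation_Jfun_bounds[OF X lam _ _ _ U(1,2) V(1,3) Sig(1) diag Sig(3,4) svd r]) auto
  have "Sr k = So k \<and> Sr k \<subseteq> {0..<N}" if "k \<le> k'" for k
    using that
  proof (induction k)
    case (Suc m)
    then have IH: "Sr m = So m" "Sr m \<subseteq> {0..<N}" and m: "1 \<le> Suc m" "Suc m \<le> p" "Suc m \<le> k'"
      using k' by auto
    have sr_F: "sr (Suc m) \<in> feasible X lam (Sr m)"
      using sr[OF m(1,2)] by (simp add: is_argmax_gain_def)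
    have "is_argmax_gain X lam Z (Sr m) (feasible X lam (Sr m) - {sr (Suc m)}) (sr2 (Suc m))"
      using sr2[OF m(1,3)] by (simp add: Z_def)
    moreover have "is_argmax_gain X lam Yt (Sr m) (feasible X lam (Sr m)) (so (Suc m))"
      using so[OF m(1,2)] IH(1) by simp
    moreover have
      "Jfun X lam Z (insert (sr (Suc m)) (Sr m)) - Jfun X lam Z (insert (sr2 (Suc m)) (Sr m)) > tail"
      using gap[OF m(1,3)] Srk[OF m(1,2)] by (simp add: Z_def tail_def)
    ultimately have "so (Suc m) = sr (Suc m)"
      using greedy_choice_stable_under_perturbation[OF sr_F _ _ close[OF IH(2)]] by blast
    then show ?case
      using Srk[OF m(1,2)] Sok[OF m(1,2)] IH sr_F X by (auto simp: feasible_def)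
  qed (simp add: Sr0 So0)
  then show ?thesis by simp
qed

end
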